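(* Assume Condition 1. Pick any $\pi\in\Pi$ and $t\ge t_1$. If $\bar V_t(\pi)>\theta K$, then \[\Delta_t(\pi)>2\sqrt{\frac{2\,\bar V_t(\pi)\,C_t}{t}}.\]
   Context: Contextual bandit setting: $A$ a set of $K$ actions, $X$ contexts, $\Pi$ a finite set of $N$ policies, $D$ a distribution over $(x,\vec r)\in X\times[0,1]^K$ with marginal $D_X$; $(x_t,\vec r_t)\sim D$ i.i.d., the learner observes $x_t$, picks $a_t$, sees only $r_t:=r_t(a_t)$. $\eta_D(\pi)=\mathbb{E}[r(\pi(x))]$, $\pi^*$ a maximizer. $W_P(x,a)=\sum_{\pi:\pi(x)=a}P(\pi)$. With history $((x_i,a_i,r_i,p_i))_{i\le t}$, $\eta_t(W)=\frac1t\sum_i r_iW(x_i,a_i)/p_i$ for randomized policies $W$, $\pi_t=\arg\max_\pi\eta_t(\pi)$, $\Delta_t(W)=\eta_t(\pi_t)-\eta_t(W)$; $\mathbb{E}_{x\sim h_{t-1}}$ is the average over $x_1,\dots,x_{t-1}$. Actions are chosen by RandomizedUCB$(\Pi,\delta,K)$: $C_t=2\log(Nt/\delta)$, $\mu_t=\min\{\frac1{2K},\sqrt{C_t/(2Kt)}\}$; $P_t$ is a distribution over $\Pi$ whose objective $\sum_\pi P(\pi)\Delta_{t-1}(\pi)$ is within $\epsilon_{\mathrm{opt},t}=O(\sqrt{KC_t/t})$ of the optimum of minimizing it subject to: for all distributions $Q$ over $\Pi$, $\mathbb{E}_{\pi\sim Q}\mathbb{E}_{x\sim h_{t-1}}[1/((1-K\mu_t)W_P(x,\pi(x))+\mu_t)]\le\max\{4K,(t-1)\Delta_{t-1}(W_Q)^2/(180C_{t-1})\}$,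 with each constraint satisfied up to additive slack $K$; $W'_t(a)=(1-K\mu_t)W_{P_t}(x_t,a)+\mu_t$, $a_t\sim W'_t$, $p_t=W'_t(a_t)$. Constants: $\epsilon\in(0,1)$ fixed, $\rho=7500/\epsilon^3$, $\theta=(\rho+1)/(1-(1+\epsilon)/2)$. $t_0$ is the first $t$ with $\mu_t=\sqrt{C_t/(2Kt)}$; $t_1=\lceil16K\log(8KN/\delta)\rceil$. $V_t(\pi)=K$ for $t\le t_0$ and $V_t(\pi)=K+\mathbb{E}_{x\sim D_X}[1/((1-K\mu_t)W_{P_t}(x,\pi(x))+\mu_t)]$ for $t>t_0$; $\bar V_t(\pi)=\max_{\tau\le t}V_\tau(\pi)$. Condition 1: (i) for all $\pi\in\Pi$ and $t\ge t_1$, $\mathbb{E}_{x\sim D_X}[1/((1-K\mu_t)W_{P_t}(x,\pi(x))+\mu_t)]\le(1+\epsilon)\mathbb{E}_{x\sim h_{t-1}}[1/((1-K\mu_t)W_{P_t}(x,\pi(x))+\mu_t)]+\rho K$; and (ii) for all $\pi,\pi'\in\Pi$ and $t\ge t_0$, $|(\eta_t(\pi)-\eta_t(\pi'))-(\eta_D(\pi)-\eta_D(\pi'))|\le2\sqrt{(\bar V_t(\pi)+\bar V_t(\pi'))C_t/t}$. *)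

theory Defs
  imports "HOL-Probability.Probability"
begin

text \<open>K = number of actions, N = number of policies.
  Policies are functions 'x => 'a; a (randomized) policy W is a function 'x => 'a => real.
  Histories are indexed 1,2,3,...: xs i, as i, rs i, ps i are context, action,
  observed reward and probability at round i; Ps t is the distribution P_t over policies.\<close>

definition Cc :: "nat \<Rightarrow> real \<Rightarrow> nat \<Rightarrow> real" where
  "Cc N \<delta> t = 2 * ln (real N * real t / \<delta>)"

definition mu :: "nat \<Rightarrow> nat \<Rightarrow> real \<Rightarrow> nat \<Rightarrow> real" where
  "mu K N \<delta> t = min (1 / (2 * real K)) (sqrt (Cc N \<delta> t / (2 * real K * real t)))"

definition t0 :: "nat \<Rightarrow> nat \<Rightarrow> real \<Rightarrow> nat" where
  "t0 K N \<delta> = (LEAST t. 1 \<le> t \<and> mu K N \<delta> t = sqrt (Cc N \<delta> t / (2 * real K * real t)))"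

definition t1 :: "nat \<Rightarrow> nat \<Rightarrow> real \<Rightarrow> nat" where
  "t1 K N \<delta> = nat \<lceil>16 * real K * ln (8 * real K * real N / \<delta>)\<rceil>"

definition Wd :: "('x \<Rightarrow> 'a) set \<Rightarrow> (('x \<Rightarrow> 'a) \<Rightarrow> real) \<Rightarrow> 'x \<Rightarrow> 'a \<Rightarrow> real" where
  "Wd Pol P x a = sum P {\<pi> \<in> Pol. \<pi> x = a}"

definition polW :: "('x \<Rightarrow> 'a) \<Rightarrow> 'x \<Rightarrow> 'a \<Rightarrow> real" where
  "polW \<pi> x a = (if \<pi> x = a then 1 else 0)"

definition eta_emp :: "(nat \<Rightarrow> 'x) \<Rightarrow> (nat \<Rightarrow> 'a) \<Rightarrow> (nat \<Rightarrow> real) \<Rightarrow> (nat \<Rightarrow> real)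
    \<Rightarrow> nat \<Rightarrow> ('x \<Rightarrow> 'a \<Rightarrow> real) \<Rightarrow> real" where
  "eta_emp xs as rs ps t W = (\<Sum>i\<in>{1..t}. rs i * W (xs i) (as i) / ps i) / real t"

definition Delta_emp :: "('x \<Rightarrow> 'a) set \<Rightarrow> (nat \<Rightarrow> 'x) \<Rightarrow> (nat \<Rightarrow> 'a) \<Rightarrow> (nat \<Rightarrow> real)
    \<Rightarrow> (nat \<Rightarrow> real) \<Rightarrow> nat \<Rightarrow> ('x \<Rightarrow> 'a \<Rightarrow> real) \<Rightarrow> real" where
  "Delta_emp Pol xs as rs ps t W =
     Max ((\<lambda>\<pi>. eta_emp xs as rs ps t (polW \<pi>)) ` Pol) - eta_emp xs as rs ps t W"

definition emp_avg :: "(nat \<Rightarrow> 'x) \<Rightarrow> nat \<Rightarrow> ('x \<Rightarrow> real) \<Rightarrow> real" where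
  "emp_avg xs t f = (\<Sum>i\<in>{1..t}. f (xs i)) / real t"

definition is_dist :: "('x \<Rightarrow> 'a) set \<Rightarrow> (('x \<Rightarrow> 'a) \<Rightarrow> real) \<Rightarrow> bool" where
  "is_dist Pol Q \<longleftrightarrow> (\<forall>\<pi>\<in>Pol. 0 \<le> Q \<pi>) \<and> sum Q Pol = 1"

definition inv_prob :: "nat \<Rightarrow> nat \<Rightarrow> real \<Rightarrow> ('x \<Rightarrow> 'a) set \<Rightarrow> (('x \<Rightarrow> 'a) \<Rightarrow> real)
    \<Rightarrow> nat \<Rightarrow> 'x \<Rightarrow> ('x \<Rightarrow> 'a) \<Rightarrow> real" where
  "inv_prob K N \<delta> Pol P t x \<pi> =
     1 / ((1 - real K * mu K N \<delta> t) * Wd Pol P x (\<pi> x) + mu K N \<delta> t)"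

definition constr_lhs :: "nat \<Rightarrow> nat \<Rightarrow> real \<Rightarrow> ('x \<Rightarrow> 'a) set \<Rightarrow> (nat \<Rightarrow> 'x)
    \<Rightarrow> (('x \<Rightarrow> 'a) \<Rightarrow> real) \<Rightarrow> nat \<Rightarrow> (('x \<Rightarrow> 'a) \<Rightarrow> real) \<Rightarrow> real" where
  "constr_lhs K N \<delta> Pol xs P t Q =
     (\<Sum>\<pi>\<in>Pol. Q \<pi> * emp_avg xs (t - 1) (\<lambda>x. inv_prob K N \<delta> Pol P t x \<pi>))"

definition constr_rhs :: "nat \<Rightarrow> nat \<Rightarrow> real \<Rightarrow> ('x \<Rightarrow> 'a) set \<Rightarrow> (nat \<Rightarrow> 'x)
    \<Rightarrow> (nat \<Rightarrow> 'a) \<Rightarrow> (nat \<Rightarrow> real) \<Rightarrow> (nat \<Rightarrow> real) \<Rightarrow> nat \<Rightarrow> (('x \<Rightarrow> 'a) \<Rightarrow> real) \<Rightarrow> real" where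
  "constr_rhs K N \<delta> Pol xs as rs ps t Q =
     max (4 * real K)
         (real (t - 1) * (Delta_emp Pol xs as rs ps (t - 1) (Wd Pol Q))\<^sup>2 / (180 * Cc N \<delta> (t - 1)))"

definition objective :: "('x \<Rightarrow> 'a) set \<Rightarrow> (nat \<Rightarrow> 'x) \<Rightarrow> (nat \<Rightarrow> 'a) \<Rightarrow> (nat \<Rightarrow> real)
    \<Rightarrow> (nat \<Rightarrow> real) \<Rightarrow> nat \<Rightarrow> (('x \<Rightarrow> 'a) \<Rightarrow> real) \<Rightarrow> real" where
  "objective Pol xs as rs ps t P = (\<Sum>\<pi>\<in>Pol. P \<pi> * Delta_emp Pol xs as rs ps (t - 1) (polW \<pi>))"

text \<open>V_t(pi), with E_{x ~ D_X} f(x) written as the integral of f(fst z) over z = (x, r) ~ D.\<close>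
definition Vt :: "('x \<times> ('a \<Rightarrow> real)) measure \<Rightarrow> nat \<Rightarrow> nat \<Rightarrow> real \<Rightarrow> ('x \<Rightarrow> 'a) set
    \<Rightarrow> (nat \<Rightarrow> ('x \<Rightarrow> 'a) \<Rightarrow> real) \<Rightarrow> nat \<Rightarrow> ('x \<Rightarrow> 'a) \<Rightarrow> real" where
  "Vt D K N \<delta> Pol Ps t \<pi> =
     (if t \<le> t0 K N \<delta> then real K
      else real K + (\<integral>z. inv_prob K N \<delta> Pol (Ps t) t (fst z) \<pi> \<partial>D))"

definition Vbar :: "('x \<times> ('a \<Rightarrow> real)) measure \<Rightarrow> nat \<Rightarrow> nat \<Rightarrow> real \<Rightarrow> ('x \<Rightarrow> 'a) set
    \<Rightarrow> (nat \<Rightarrow> ('x \<Rightarrow> 'a) \<Rightarrow> real) \<Rightarrow> nat \<Rightarrow> ('x \<Rightarrow> 'a) \<Rightarrow> real" where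
  "Vbar D K N \<delta> Pol Ps t \<pi> = Max ((\<lambda>\<tau>. Vt D K N \<delta> Pol Ps \<tau> \<pi>) ` {1..t})"

definition etaD :: "('x \<times> ('a \<Rightarrow> real)) measure \<Rightarrow> ('x \<Rightarrow> 'a) \<Rightarrow> real" where
  "etaD D \<pi> = (\<integral>z. snd z (\<pi> (fst z)) \<partial>D)"

end

theory Submission
  imports Defs
begin

text \<open>By strong induction on the round, the empirically best policy always has
  \<open>Vbar \<le> \<theta> K\<close>. Suppose this holds before round t and \<open>Vbar\<^sub>t(\<pi>) > \<theta> K\<close>, attained as
  \<open>V\<^sub>\<tau>(\<pi>)\<close> for some \<open>\<tau> \<le> t\<close>. Such a large value forces \<open>\<tau>\<close> past \<open>t\<^sub>0\<close> and \<open>t\<^sub>1\<close>; then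
  Condition 1(i) makes the empirical average in the round-\<open>\<tau>\<close> constraint for the point mass at
  \<open>\<pi>\<close> exceed \<open>V\<^sub>\<tau>(\<pi>)/2\<close>, and the constraint yields \<open>\<Delta>\<^sub>\<tau>\<^sub>-\<^sub>1(\<pi>) \<ge> 9u\<close> with
  \<open>u = \<surd>(V\<^sub>\<tau>(\<pi>) C\<^sub>\<tau>\<^sub>-\<^sub>1/(\<tau>-1))\<close>. Condition 1(ii) against the empirical maximiser of round
  \<open>\<tau>-1\<close> (controlled by induction) turns this into a gap of \<open>6u\<close> in true expected reward. In
  particular the true optimum \<open>\<pi>\<^sup>*\<close> cannot have large Vbar, and Condition 1(ii) at round t between
  \<open>\<pi>\<^sup>*\<close> and \<open>\<pi>\<close> brings back an empirical gap of \<open>3u\<close>, which suffices because \<open>C\<^sub>s/s\<close> decreases.\<close>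

lemma ln_mult_div_antimono:
  fixes a s s' :: real
  assumes "1 \<le> a" "3 \<le> s" "s \<le> s'"
  shows "ln (a * s') / s' \<le> ln (a * s) / s"
proof -
  have "exp 1 \<le> a * s"
    using exp_le assms mult_mono[of 1 a 3 s] by linarith
  moreover have "a * s \<le> a * s'"
    using assms by (intro mult_left_mono) auto
  ultimately have "ln (a * s') / (a * s') \<le> ln (a * s) / (a * s)"
    by (rule ln_x_over_x_mono)
  then have "a * (ln (a * s') / (a * s')) \<le> a * (ln (a * s) / (a * s))"
    using assms by (intro mult_left_mono) auto
  then show ?thesis
    using assms by simp
qed

lemma two_sqrt_two_less_three_sqrt:
  fixes X :: real
  assumes "0 < X"
  shows "2 * sqrt (2 * X) < 3 * sqrt X"
proof (rule power2_less_imp_less)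
  show "(2 * sqrt (2 * X))\<^sup>2 < (3 * sqrt X)\<^sup>2"
    using assms by (simp add: power_mult_distrib)
qed (use assms in simp)

locale randomized_ucb =
  fixes A :: "'a set" and Pol :: "('x \<Rightarrow> 'a) set"
    and D :: "('x \<times> ('a \<Rightarrow> real)) measure"
    and \<delta> \<epsilon> :: real
    and xs :: "nat \<Rightarrow> 'x" and as :: "nat \<Rightarrow> 'a" and rs ps :: "nat \<Rightarrow> real"
    and Ps :: "nat \<Rightarrow> ('x \<Rightarrow> 'a) \<Rightarrow> real"
    and K N :: nat and \<rho> \<theta> :: real
  assumes K_def: "K = card A" and N_def: "N = card Pol"
    and rho_def: "\<rho> = 7500 / \<epsilon> ^ 3"
    and theta_def: "\<theta> = (\<rho> + 1) / (1 - (1 + \<epsilon>) / 2)"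
    and A_fin: "finite A" and A_ne: "A \<noteq> {}"
    and Pi_fin: "finite Pol" and Pi_ne: "Pol \<noteq> {}"
    and D_prob: "prob_space D"
    and \<delta>_pos: "0 < \<delta>" and \<delta>_lt: "\<delta> < 1"
    and \<epsilon>_pos: "0 < \<epsilon>" and \<epsilon>_lt: "\<epsilon> < 1"
    and alg_dist: "\<forall>s\<ge>1. is_dist Pol (Ps s)"
    and alg_constr: "\<forall>s\<ge>1. \<forall>Q. is_dist Pol Q \<longrightarrow>
        constr_lhs K N \<delta> Pol xs (Ps s) s Q \<le> constr_rhs K N \<delta> Pol xs as rs ps s Q + real K"
    and cond1_i: "\<forall>\<sigma>\<in>Pol. \<forall>s\<ge>t1 K N \<delta>.
        (\<integral>z. inv_prob K N \<delta> Pol (Ps s) s (fst z) \<sigma> \<partial>D)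
          \<le> (1 + \<epsilon>) * emp_avg xs (s - 1) (\<lambda>x. inv_prob K N \<delta> Pol (Ps s) s x \<sigma>) + \<rho> * real K"
    and cond1_ii: "\<forall>\<sigma>\<in>Pol. \<forall>\<sigma>'\<in>Pol. \<forall>s\<ge>t0 K N \<delta>.
        \<bar>(eta_emp xs as rs ps s (polW \<sigma>) - eta_emp xs as rs ps s (polW \<sigma>'))
           - (etaD D \<sigma> - etaD D \<sigma>')\<bar>
        \<le> 2 * sqrt ((Vbar D K N \<delta> Pol Ps s \<sigma> + Vbar D K N \<delta> Pol Ps s \<sigma>') * Cc N \<delta> s / real s)"
begin

abbreviation "C s \<equiv> Cc N \<delta> s"
abbreviation "\<mu> s \<equiv> mu K N \<delta> s"
abbreviation "inv_p s x \<sigma> \<equiv> inv_prob K N \<delta> Pol (Ps s) s x \<sigma>"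
abbreviation "\<eta> s \<sigma> \<equiv> eta_emp xs as rs ps s (polW \<sigma>)"
abbreviation "\<Delta> s \<sigma> \<equiv> Delta_emp Pol xs as rs ps s (polW \<sigma>)"
abbreviation "V s \<sigma> \<equiv> Vt D K N \<delta> Pol Ps s \<sigma>"
abbreviation "Vb s \<sigma> \<equiv> Vbar D K N \<delta> Pol Ps s \<sigma>"

subsection \<open>Elementary bounds on the parameters\<close>

lemma K_ge_1: "1 \<le> real K"
  using A_fin A_ne K_def by (simp add: Suc_leI card_gt_0_iff)

lemma N_ge_1: "1 \<le> real N"
  using Pi_fin Pi_ne N_def by (simp add: Suc_leI card_gt_0_iff)

lemma theta_ge_20: "20 \<le> \<theta>"
proof -
  have "\<epsilon> ^ 3 \<le> 1" "0 < \<epsilon> ^ 3"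
    using \<epsilon>_pos \<epsilon>_lt by (auto simp: power_le_one)
  then have "7500 \<le> \<rho>"
    unfolding rho_def by (simp add: le_divide_eq)
  moreover have "0 < 1 - (1 + \<epsilon>) / 2" "1 - (1 + \<epsilon>) / 2 \<le> 1"
    using \<epsilon>_pos \<epsilon>_lt by auto
  ultimately have "\<rho> + 1 \<le> \<theta>"
    unfolding theta_def by (simp add: le_divide_eq mult_left_le)
  with \<open>7500 \<le> \<rho>\<close> show ?thesis
    by simp
qed

lemma theta_K_ge_20K: "20 * real K \<le> \<theta> * real K"
  using theta_ge_20 K_ge_1 by (intro mult_right_mono) auto

lemma theta_K_pos: "0 < \<theta> * real K"
  using theta_K_ge_20K K_ge_1 by simp

lemma theta_times_one_minus_eps: "\<theta> * (1 - \<epsilon>) = 2 * (\<rho> + 1)"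
  unfolding theta_def using \<epsilon>_lt by (simp add: field_simps)

lemma C_pos: "1 \<le> s \<Longrightarrow> 0 < C s"
proof -
  assume "1 \<le> s"
  then have "1 \<le> real N * real s"
    using N_ge_1 mult_mono[of 1 "real N" 1 "real s"] by simp
  then have "1 < real N * real s / \<delta>"
    using \<delta>_pos \<delta>_lt by (simp add: less_divide_eq)
  then show ?thesis
    unfolding Cc_def by simp
qed

lemma C_ge_ln:
  assumes s: "1 \<le> s"
  shows "2 * ln (real s) \<le> C s" "2 * ln (real N / \<delta>) \<le> C s"
proof -
  have "real s \<le> real N * real s / \<delta>"
    using N_ge_1 \<delta>_pos \<delta>_lt s by (simp add: le_divide_eq mult_le_cancel_right1 mult_le_one)
  moreover have "real N / \<delta> \<le> real N * real s / \<delta>"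
    using s \<delta>_pos N_ge_1 by (simp add: divide_right_mono)
  moreover have "0 < real s" "0 < real N / \<delta>"
    using s \<delta>_pos N_ge_1 by auto
  ultimately show "2 * ln (real s) \<le> C s" "2 * ln (real N / \<delta>) \<le> C s"
    unfolding Cc_def by auto
qed

lemma C_div_antimono:
  assumes "3 \<le> s" "s \<le> s'"
  shows "C s' / real s' \<le> C s / real s"
proof -
  have "1 \<le> real N / \<delta>"
    using N_ge_1 \<delta>_pos \<delta>_lt by (simp add: le_divide_eq)
  then have "ln (real N / \<delta> * real s') / real s' \<le> ln (real N / \<delta> * real s) / real s"
    using assms by (intro ln_mult_div_antimono) auto
  then show ?thesis
    unfolding Cc_def by (simp add: mult.commute)
qed

lemma mu_pos: "1 \<le> s \<Longrightarrow> 0 < \<mu> s"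
  using C_pos[of s] K_ge_1 unfolding mu_def by auto

lemma Wd_nonneg: "1 \<le> s \<Longrightarrow> 0 \<le> Wd Pol (Ps s) x a"
  using alg_dist unfolding is_dist_def Wd_def by (auto intro: sum_nonneg)

lemma inv_prob_pos_le:
  assumes s: "1 \<le> s"
  shows "0 < inv_p s x \<sigma>" "inv_p s x \<sigma> \<le> 1 / \<mu> s"
proof -
  have "\<mu> s \<le> 1 / (2 * real K)"
    unfolding mu_def by simp
  then have "real K * \<mu> s \<le> 1 / 2"
    using K_ge_1 by (simp add: field_simps)
  then have "\<mu> s \<le> (1 - real K * \<mu> s) * Wd Pol (Ps s) x (\<sigma> x) + \<mu> s"
    using Wd_nonneg[OF s] by simp
  then show "0 < inv_p s x \<sigma>" "inv_p s x \<sigma> \<le> 1 / \<mu> s"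
    using mu_pos[OF s] unfolding inv_prob_def by (simp_all add: divide_left_mono)
qed

lemma Vt_le: "1 \<le> s \<Longrightarrow> V s \<sigma> \<le> real K + 1 / \<mu> s"
proof -
  assume s: "1 \<le> s"
  interpret prob_space D by (rule D_prob)
  have "(\<integral>z. inv_p s (fst z) \<sigma> \<partial>D) \<le> (\<integral>z. 1 / \<mu> s \<partial>D)"
    using inv_prob_pos_le[OF s] mu_pos[OF s] by (intro integral_mono') auto
  then show ?thesis
    using mu_pos[OF s] unfolding Vt_def by (simp add: prob_space)
qed

text \<open>For \<open>s \<ge> 64 K\<^sup>2 N/\<delta>\<close> the exploration floor \<open>1/(2K)\<close> is no longer the smaller term of \<open>\<mu>\<^sub>s\<close>,
  so the \<open>LEAST\<close> defining \<open>t\<^sub>0\<close> is taken over a nonempty set.\<close>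
lemma mu_eq_sqrt_eventually: "\<exists>s. 1 \<le> s \<and> \<mu> s = sqrt (C s / (2 * real K * real s))"
proof -
  define s where "s = nat \<lceil>64 * real K ^ 2 * real N / \<delta>\<rceil> + 1"
  have s_pos: "0 < real s" and s_ge: "64 * real K ^ 2 * real N / \<delta> \<le> real s"
    unfolding s_def by linarith+
  define y where "y = sqrt (real N * real s / \<delta>)"
  have y_sq: "y\<^sup>2 = real N * real s / \<delta>" and y_pos: "0 < y"
    unfolding y_def using N_ge_1 s_pos \<delta>_pos by simp_all
  have "C s = 4 * ln y"
    unfolding Cc_def y_sq[symmetric] using y_pos by (simp add: ln_realpow)
  also have "\<dots> \<le> 4 * y"
    using ln_le_minus_one[OF y_pos] by simp
  finally have C_le: "C s \<le> 4 * y" .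
  have "64 * real K ^ 2 * y\<^sup>2 \<le> real s * real s"
    using s_ge s_pos \<delta>_pos unfolding y_sq by (simp add: field_simps mult_right_mono)
  then have "(8 * real K * y)\<^sup>2 \<le> (real s)\<^sup>2"
    by (simp add: power2_eq_square algebra_simps)
  then have "8 * real K * y \<le> real s"
    by (rule power2_le_imp_le) simp
  moreover have "C s * (2 * real K) \<le> 4 * y * (2 * real K)"
    using C_le K_ge_1 by (intro mult_right_mono) auto
  ultimately have "C s * (2 * real K) \<le> real s"
    by (simp add: algebra_simps)
  then have "C s / (2 * real K * real s) \<le> (1 / (2 * real K))\<^sup>2"
    using K_ge_1 s_pos by (simp add: field_simps power2_eq_square)
  then have "sqrt (C s / (2 * real K * real s)) \<le> 1 / (2 * real K)"
    using K_ge_1 real_sqrt_le_mono by fastforce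
  then show ?thesis
    unfolding mu_def by (intro exI[of _ s]) (auto simp: s_def)
qed

lemma t0_ge_1: "1 \<le> t0 K N \<delta>"
  unfolding t0_def using LeastI_ex[OF mu_eq_sqrt_eventually] by blast

lemma t1_ge_1: "1 \<le> t1 K N \<delta>"
proof -
  have "1 \<le> real K * real N"
    using K_ge_1 N_ge_1 mult_mono[of 1 "real K" 1 "real N"] by simp
  then have "1 < 8 * real K * real N / \<delta>"
    using \<delta>_pos \<delta>_lt by (simp add: less_divide_eq)
  then have "0 < 16 * real K * ln (8 * real K * real N / \<delta>)"
    using K_ge_1 by simp
  then show ?thesis
    unfolding t1_def by linarith
qed

lemma round_bounds_of_C_small:
  assumes "2 \<le> \<tau>" "361 * real K * C \<tau> < 2 * real \<tau>"
  shows "t1 K N \<delta> \<le> \<tau>" "180 \<le> \<tau>"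
proof -
  have C_ge: "2 * ln (real \<tau>) \<le> C \<tau>" "2 * ln (real N / \<delta>) \<le> C \<tau>"
    using C_ge_ln[of \<tau>] assms(1) by simp_all
  have "ln (1 / 2 :: real) \<le> 1 / 2 - 1"
    by (rule ln_le_minus_one) simp
  then have "1 / 2 \<le> ln (2 :: real)"
    by (simp add: ln_div)
  moreover have "ln 2 \<le> ln (real \<tau>)"
    using assms(1) by simp
  ultimately have "361 * real K \<le> 361 * real K * C \<tau>"
    using C_ge K_ge_1 by (simp add: mult_le_cancel_left1)
  then have \<tau>_large: "180 * real K < real \<tau>"
    using assms(2) by linarith
  then show "180 \<le> \<tau>"
    using K_ge_1 by linarith
  have "ln (8 * real K) \<le> ln (real \<tau>)"
    using \<tau>_large K_ge_1 by simp
  moreover have "ln (8 * real K * real N / \<delta>) = ln (8 * real K) + ln (real N / \<delta>)"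
    using K_ge_1 N_ge_1 \<delta>_pos by (simp add: ln_mult_pos[symmetric] mult.assoc)
  ultimately have "ln (8 * real K * real N / \<delta>) \<le> C \<tau>"
    using C_ge by linarith
  then have "16 * real K * ln (8 * real K * real N / \<delta>) \<le> 16 * real K * C \<tau>"
    using K_ge_1 by (intro mult_left_mono) auto
  also have "\<dots> \<le> real \<tau>"
    using assms(2) K_ge_1 C_pos[of \<tau>] assms(1) by simp
  finally show "t1 K N \<delta> \<le> \<tau>"
    unfolding t1_def by (simp add: nat_le_iff ceiling_le_iff)
qed

lemma round_bounds_of_Vt_large:
  assumes \<tau>: "1 \<le> \<tau>" and V_large: "\<theta> * real K < V \<tau> \<sigma>"
  shows "t0 K N \<delta> < \<tau>" "2 \<le> \<tau>" "t1 K N \<delta> \<le> \<tau>" "180 \<le> \<tau>"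
proof -
  show "t0 K N \<delta> < \<tau>"
    using V_large theta_K_ge_20K K_ge_1 unfolding Vt_def by (auto split: if_splits)
  then show "2 \<le> \<tau>"
    using t0_ge_1 by simp
  have inv_mu: "19 * real K < 1 / \<mu> \<tau>"
    using Vt_le[OF \<tau>, of \<sigma>] V_large theta_K_ge_20K by simp
  then have "\<mu> \<tau> = sqrt (C \<tau> / (2 * real K * real \<tau>))"
    using K_ge_1 unfolding mu_def by (auto simp: min_def split: if_splits)
  then have "(\<mu> \<tau>)\<^sup>2 = C \<tau> / (2 * real K * real \<tau>)"
    using C_pos[OF \<tau>] by simp
  moreover have "\<mu> \<tau> < 1 / (19 * real K)"
    using inv_mu mu_pos[OF \<tau>] K_ge_1 by (simp add: field_simps)
  then have "(\<mu> \<tau>)\<^sup>2 < (1 / (19 * real K))\<^sup>2"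
    using mu_pos[OF \<tau>] by (intro power_strict_mono) auto
  ultimately have "C \<tau> / (2 * real K * real \<tau>) < 1 / (361 * real K * real K)"
    by (simp add: power2_eq_square)
  then have "361 * real K * C \<tau> < 2 * real \<tau>"
    using K_ge_1 \<tau> by (simp add: field_simps)
  with \<open>2 \<le> \<tau>\<close> show "t1 K N \<delta> \<le> \<tau>" "180 \<le> \<tau>"
    by (rule round_bounds_of_C_small)+
qed

subsection \<open>Empirical regret and variance bounds\<close>

lemma Delta_ge: "\<sigma>' \<in> Pol \<Longrightarrow> \<eta> s \<sigma>' - \<eta> s \<sigma> \<le> \<Delta> s \<sigma>"
  unfolding Delta_emp_def using Pi_fin by (simp add: Max_ge)

lemma Delta_nonneg: "\<sigma> \<in> Pol \<Longrightarrow> 0 \<le> \<Delta> s \<sigma>"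
  using Delta_ge[of \<sigma> s \<sigma>] by simp

lemma empirical_argmax_exists:
  obtains \<sigma>\<^sub>m where "\<sigma>\<^sub>m \<in> Pol" "\<Delta> s \<sigma>\<^sub>m = 0" "\<And>\<sigma>. \<Delta> s \<sigma> = \<eta> s \<sigma>\<^sub>m - \<eta> s \<sigma>"
proof -
  have "Max ((\<lambda>\<sigma>. \<eta> s \<sigma>) ` Pol) \<in> (\<lambda>\<sigma>. \<eta> s \<sigma>) ` Pol"
    using Pi_fin Pi_ne by (intro Max_in) auto
  then obtain \<sigma>\<^sub>m where "\<sigma>\<^sub>m \<in> Pol" "Max ((\<lambda>\<sigma>. \<eta> s \<sigma>) ` Pol) = \<eta> s \<sigma>\<^sub>m"
    by auto
  then show ?thesis
    using that unfolding Delta_emp_def by simp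
qed

lemma Vbar_attained: "1 \<le> s \<Longrightarrow> \<exists>\<tau>\<in>{1..s}. Vb s \<sigma> = V \<tau> \<sigma>"
proof -
  assume "1 \<le> s"
  then have "Vb s \<sigma> \<in> (\<lambda>\<tau>. V \<tau> \<sigma>) ` {1..s}"
    unfolding Vbar_def by (intro Max_in) auto
  then show ?thesis
    by auto
qed

lemma Vbar_mono: "1 \<le> s \<Longrightarrow> s \<le> s' \<Longrightarrow> Vb s \<sigma> \<le> Vb s' \<sigma>"
  unfolding Vbar_def by (intro Max_mono) auto

subsection \<open>Large variance forces large empirical regret\<close>

lemma Wd_point_mass:
  assumes "\<sigma> \<in> Pol"
  shows "Wd Pol (\<lambda>\<sigma>'. if \<sigma>' = \<sigma> then 1 else 0) = polW \<sigma>"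
proof (intro ext)
  fix x a
  show "Wd Pol (\<lambda>\<sigma>'. if \<sigma>' = \<sigma> then 1 else 0) x a = polW \<sigma> x a"
    unfolding Wd_def polW_def using Pi_fin assms by (simp add: sum.delta)
qed

lemma point_mass_constraint:
  assumes "1 \<le> \<tau>" "\<sigma> \<in> Pol"
  shows "emp_avg xs (\<tau> - 1) (\<lambda>x. inv_p \<tau> x \<sigma>)
    \<le> max (4 * real K) (real (\<tau> - 1) * (\<Delta> (\<tau> - 1) \<sigma>)\<^sup>2 / (180 * C (\<tau> - 1))) + real K"
proof -
  define Q where "Q = (\<lambda>\<sigma>'. if \<sigma>' = \<sigma> then 1 else 0 :: real)"
  have "is_dist Pol Q"
    unfolding is_dist_def Q_def using assms(2) Pi_fin by (simp add: sum.delta')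
  then have "constr_lhs K N \<delta> Pol xs (Ps \<tau>) \<tau> Q \<le> constr_rhs K N \<delta> Pol xs as rs ps \<tau> Q + real K"
    using alg_constr assms(1) by blast
  moreover have "constr_lhs K N \<delta> Pol xs (Ps \<tau>) \<tau> Q = emp_avg xs (\<tau> - 1) (\<lambda>x. inv_p \<tau> x \<sigma>)"
    unfolding constr_lhs_def Q_def using assms(2) Pi_fin by (simp add: if_distrib[of "\<lambda>c. c * _"] sum.delta cong: if_cong)
  moreover have "constr_rhs K N \<delta> Pol xs as rs ps \<tau> Q
      = max (4 * real K) (real (\<tau> - 1) * (\<Delta> (\<tau> - 1) \<sigma>)\<^sup>2 / (180 * C (\<tau> - 1)))"
    unfolding constr_rhs_def Q_def using Wd_point_mass[OF assms(2)] by simp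
  ultimately show ?thesis
    by simp
qed

lemma emp_avg_inv_prob_gt_half_Vt:
  assumes \<tau>: "1 \<le> \<tau>" and \<sigma>: "\<sigma> \<in> Pol" and V_large: "\<theta> * real K < V \<tau> \<sigma>"
  shows "V \<tau> \<sigma> / 2 < emp_avg xs (\<tau> - 1) (\<lambda>x. inv_p \<tau> x \<sigma>)"
proof -
  define E where "E = emp_avg xs (\<tau> - 1) (\<lambda>x. inv_p \<tau> x \<sigma>)"
  note rounds = round_bounds_of_Vt_large[OF \<tau> V_large]
  have "V \<tau> \<sigma> = real K + (\<integral>z. inv_p \<tau> (fst z) \<sigma> \<partial>D)"
    unfolding Vt_def using rounds by simp
  moreover have "(\<integral>z. inv_p \<tau> (fst z) \<sigma> \<partial>D) \<le> (1 + \<epsilon>) * E + \<rho> * real K"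
    unfolding E_def using cond1_i \<sigma> rounds by auto
  moreover have "(1 - \<epsilon>) * (\<theta> * real K) < (1 - \<epsilon>) * V \<tau> \<sigma>"
    using V_large \<epsilon>_lt by simp
  moreover have "(1 - \<epsilon>) * (\<theta> * real K) = 2 * (\<rho> * real K) + 2 * real K"
  proof -
    have "(1 - \<epsilon>) * (\<theta> * real K) = \<theta> * (1 - \<epsilon>) * real K"
      by (simp add: ac_simps)
    then show ?thesis
      unfolding theta_times_one_minus_eps by (simp add: algebra_simps)
  qed
  moreover have "(1 + \<epsilon>) * (V \<tau> \<sigma> / 2) = V \<tau> \<sigma> - (1 - \<epsilon>) * V \<tau> \<sigma> / 2"
    by (simp add: field_simps)
  ultimately have "(1 + \<epsilon>) * (V \<tau> \<sigma> / 2) < (1 + \<epsilon>) * E"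
    by linarith
  then show ?thesis
    unfolding E_def using \<epsilon>_pos by simp
qed

lemma Delta_pred_ge_of_Vt_large:
  assumes \<tau>: "1 \<le> \<tau>" and \<sigma>: "\<sigma> \<in> Pol" and V_large: "\<theta> * real K < V \<tau> \<sigma>"
  shows "9 * sqrt (V \<tau> \<sigma> * C (\<tau> - 1) / real (\<tau> - 1)) \<le> \<Delta> (\<tau> - 1) \<sigma>"
proof -
  define T where "T = real (\<tau> - 1)"
  define d where "d = \<Delta> (\<tau> - 1) \<sigma>"
  define X where "X = T * d\<^sup>2 / (180 * C (\<tau> - 1))"
  have T_pos: "0 < T" and C_pos': "0 < C (\<tau> - 1)"
    unfolding T_def using round_bounds_of_Vt_large(2)[OF \<tau> V_large] C_pos[of "\<tau> - 1"] by auto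
  have "emp_avg xs (\<tau> - 1) (\<lambda>x. inv_p \<tau> x \<sigma>) \<le> max (4 * real K) X + real K"
    using point_mass_constraint[OF \<tau> \<sigma>] unfolding X_def T_def d_def .
  moreover have "20 * real K < V \<tau> \<sigma>"
    using V_large theta_K_ge_20K by simp
  ultimately have "9 * V \<tau> \<sigma> / 20 < X"
    using emp_avg_inv_prob_gt_half_Vt[OF \<tau> \<sigma> V_large] by (simp add: max_def split: if_splits)
  then have "81 * (V \<tau> \<sigma> * C (\<tau> - 1) / T) < d\<^sup>2"
    unfolding X_def using C_pos' T_pos by (simp add: field_simps)
  moreover have "(9 * sqrt (V \<tau> \<sigma> * C (\<tau> - 1) / T))\<^sup>2 = 81 * (V \<tau> \<sigma> * C (\<tau> - 1) / T)"
    using V_large theta_K_pos C_pos' T_pos by (simp add: power_mult_distrib)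
  ultimately have "(9 * sqrt (V \<tau> \<sigma> * C (\<tau> - 1) / T))\<^sup>2 < d\<^sup>2"
    by simp
  moreover have "0 \<le> d"
    unfolding d_def using Delta_nonneg[OF \<sigma>] .
  ultimately have "9 * sqrt (V \<tau> \<sigma> * C (\<tau> - 1) / T) < d"
    by (rule power2_less_imp_less)
  then show ?thesis
    unfolding d_def T_def by simp
qed

subsection \<open>Transfer between empirical and true rewards\<close>

lemma eta_deviation_le:
  assumes \<sigma>: "\<sigma> \<in> Pol" "\<sigma>' \<in> Pol" and s: "1 \<le> s" "t0 K N \<delta> \<le> s"
    and W: "0 < W" "Vb s \<sigma> + Vb s \<sigma>' \<le> 2 * W"
  shows "\<bar>(\<eta> s \<sigma> - \<eta> s \<sigma>') - (etaD D \<sigma> - etaD D \<sigma>')\<bar> \<le> 3 * sqrt (W * C s / real s)"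
proof -
  have "(Vb s \<sigma> + Vb s \<sigma>') * C s / real s \<le> 2 * (W * C s / real s)"
    using W(2) C_pos[OF s(1)] s(1) by (simp add: divide_right_mono mult_right_mono)
  then have "2 * sqrt ((Vb s \<sigma> + Vb s \<sigma>') * C s / real s) \<le> 2 * sqrt (2 * (W * C s / real s))"
    by simp
  also have "\<dots> < 3 * sqrt (W * C s / real s)"
    using W(1) C_pos[OF s(1)] s(1) by (intro two_sqrt_two_less_three_sqrt) simp
  finally show ?thesis
    using cond1_ii \<sigma> s(2) by fastforce
qed

definition argmax_Vbar_bounded :: "nat \<Rightarrow> bool" where
  "argmax_Vbar_bounded s \<longleftrightarrow> (\<forall>\<sigma>\<in>Pol. \<Delta> s \<sigma> = 0 \<longrightarrow> Vb s \<sigma> \<le> \<theta> * real K)"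

lemma etaD_gap_ge_Delta:
  assumes bounded: "argmax_Vbar_bounded s" and s: "1 \<le> s" "t0 K N \<delta> \<le> s"
    and \<sigma>: "\<sigma> \<in> Pol" and W: "\<theta> * real K \<le> W" "Vb s \<sigma> \<le> W"
  obtains \<sigma>' where "\<sigma>' \<in> Pol" "\<Delta> s \<sigma> - 3 * sqrt (W * C s / real s) \<le> etaD D \<sigma>' - etaD D \<sigma>"
proof -
  obtain \<sigma>\<^sub>m where m: "\<sigma>\<^sub>m \<in> Pol" "\<Delta> s \<sigma>\<^sub>m = 0" "\<And>\<sigma>. \<Delta> s \<sigma> = \<eta> s \<sigma>\<^sub>m - \<eta> s \<sigma>"
    using empirical_argmax_exists[where s = s] by blast
  have "Vb s \<sigma>\<^sub>m \<le> \<theta> * real K"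
    using bounded m unfolding argmax_Vbar_bounded_def by blast
  then have "\<bar>(\<eta> s \<sigma>\<^sub>m - \<eta> s \<sigma>) - (etaD D \<sigma>\<^sub>m - etaD D \<sigma>)\<bar> \<le> 3 * sqrt (W * C s / real s)"
    using W theta_K_pos by (intro eta_deviation_le m(1) \<sigma> s) auto
  then show ?thesis
    using that[OF m(1)] m(3)[of \<sigma>] by (simp add: abs_le_iff)
qed

lemma optimal_policy_exists:
  obtains \<sigma>\<^sub>o\<^sub>p\<^sub>t where "\<sigma>\<^sub>o\<^sub>p\<^sub>t \<in> Pol" "\<And>\<sigma>. \<sigma> \<in> Pol \<Longrightarrow> etaD D \<sigma> \<le> etaD D \<sigma>\<^sub>o\<^sub>p\<^sub>t"
proof -
  have "Max (etaD D ` Pol) \<in> etaD D ` Pol"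
    using Pi_fin Pi_ne by (intro Max_in) auto
  then obtain \<sigma>\<^sub>o\<^sub>p\<^sub>t where "\<sigma>\<^sub>o\<^sub>p\<^sub>t \<in> Pol" "etaD D \<sigma>\<^sub>o\<^sub>p\<^sub>t = Max (etaD D ` Pol)"
    by auto
  then show ?thesis
    using that Pi_fin by simp
qed

subsection \<open>Induction over the rounds\<close>

lemma etaD_gap_of_Vbar_large:
  assumes IH: "\<And>s'. 1 \<le> s' \<Longrightarrow> s' < s \<Longrightarrow> argmax_Vbar_bounded s'"
    and s: "1 \<le> s" and \<sigma>: "\<sigma> \<in> Pol" and Vb_large: "\<theta> * real K < Vb s \<sigma>"
  obtains \<tau> \<sigma>' where "t0 K N \<delta> < \<tau>" "180 \<le> \<tau>" "\<tau> \<le> s" "\<sigma>' \<in> Pol"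
    "6 * sqrt (Vb s \<sigma> * C (\<tau> - 1) / real (\<tau> - 1)) \<le> etaD D \<sigma>' - etaD D \<sigma>"
proof -
  obtain \<tau> where \<tau>: "1 \<le> \<tau>" "\<tau> \<le> s" and Vb_eq: "Vb s \<sigma> = V \<tau> \<sigma>"
    using Vbar_attained[OF s, of \<sigma>] by (auto simp: atLeastAtMost_iff)
  with Vb_large have V_large: "\<theta> * real K < V \<tau> \<sigma>"
    by simp
  note rounds = round_bounds_of_Vt_large[OF \<tau>(1) V_large]
  define u where "u = sqrt (Vb s \<sigma> * C (\<tau> - 1) / real (\<tau> - 1))"
  have Delta_large: "9 * u \<le> \<Delta> (\<tau> - 1) \<sigma>"
    unfolding u_def Vb_eq by (rule Delta_pred_ge_of_Vt_large[OF \<tau>(1) \<sigma> V_large])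
  have bounded: "argmax_Vbar_bounded (\<tau> - 1)"
    using IH rounds(2) \<tau>(2) by simp
  have pred: "1 \<le> \<tau> - 1" "t0 K N \<delta> \<le> \<tau> - 1"
    using rounds(1,2) by auto
  have "Vb (\<tau> - 1) \<sigma> \<le> Vb s \<sigma>"
    using pred(1) \<tau>(2) by (intro Vbar_mono) auto
  then obtain \<sigma>' where "\<sigma>' \<in> Pol" "\<Delta> (\<tau> - 1) \<sigma> - 3 * u \<le> etaD D \<sigma>' - etaD D \<sigma>"
    using etaD_gap_ge_Delta[OF bounded pred \<sigma> less_imp_le[OF Vb_large]] unfolding u_def by blast
  with Delta_large show ?thesis
    using that rounds \<tau>(2) unfolding u_def by fastforce
qed

lemma optimal_policy_Vbar_bounded:
  assumes IH: "\<And>s'. 1 \<le> s' \<Longrightarrow> s' < s \<Longrightarrow> argmax_Vbar_bounded s'"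
    and s: "1 \<le> s" and opt: "\<sigma>\<^sub>o\<^sub>p\<^sub>t \<in> Pol" "\<And>\<sigma>. \<sigma> \<in> Pol \<Longrightarrow> etaD D \<sigma> \<le> etaD D \<sigma>\<^sub>o\<^sub>p\<^sub>t"
  shows "Vb s \<sigma>\<^sub>o\<^sub>p\<^sub>t \<le> \<theta> * real K"
proof (rule ccontr)
  assume "\<not> ?thesis"
  then have Vb_large: "\<theta> * real K < Vb s \<sigma>\<^sub>o\<^sub>p\<^sub>t"
    by simp
  obtain \<tau> \<sigma>' where \<tau>: "180 \<le> \<tau>" and \<sigma>': "\<sigma>' \<in> Pol"
    and gap: "6 * sqrt (Vb s \<sigma>\<^sub>o\<^sub>p\<^sub>t * C (\<tau> - 1) / real (\<tau> - 1)) \<le> etaD D \<sigma>' - etaD D \<sigma>\<^sub>o\<^sub>p\<^sub>t"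
    using etaD_gap_of_Vbar_large[OF IH s opt(1) Vb_large] by blast
  have "0 < sqrt (Vb s \<sigma>\<^sub>o\<^sub>p\<^sub>t * C (\<tau> - 1) / real (\<tau> - 1))"
    using Vb_large theta_K_pos C_pos[of "\<tau> - 1"] \<tau> by simp
  then show False
    using gap opt(2)[OF \<sigma>'] by linarith
qed

lemma Delta_large_of_Vbar_large_step:
  assumes IH: "\<And>s'. 1 \<le> s' \<Longrightarrow> s' < s \<Longrightarrow> argmax_Vbar_bounded s'"
    and s: "1 \<le> s" and \<sigma>: "\<sigma> \<in> Pol" and Vb_large: "\<theta> * real K < Vb s \<sigma>"
  shows "2 * sqrt (2 * Vb s \<sigma> * C s / real s) < \<Delta> s \<sigma>"
proof -
  define W where "W = Vb s \<sigma>"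
  have W_pos: "0 < W"
    unfolding W_def using Vb_large theta_K_pos by simp
  obtain \<sigma>\<^sub>o\<^sub>p\<^sub>t where opt: "\<sigma>\<^sub>o\<^sub>p\<^sub>t \<in> Pol" "\<And>\<sigma>. \<sigma> \<in> Pol \<Longrightarrow> etaD D \<sigma> \<le> etaD D \<sigma>\<^sub>o\<^sub>p\<^sub>t"
    using optimal_policy_exists by blast
  obtain \<tau> \<sigma>' where \<tau>: "t0 K N \<delta> < \<tau>" "180 \<le> \<tau>" "\<tau> \<le> s" and \<sigma>': "\<sigma>' \<in> Pol"
    and gap: "6 * sqrt (W * C (\<tau> - 1) / real (\<tau> - 1)) \<le> etaD D \<sigma>' - etaD D \<sigma>"
    using etaD_gap_of_Vbar_large[OF IH s \<sigma> Vb_large] unfolding W_def by blast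
  define u where "u = sqrt (W * C (\<tau> - 1) / real (\<tau> - 1))"
  define w where "w = sqrt (W * C s / real s)"
  have "Vb s \<sigma>\<^sub>o\<^sub>p\<^sub>t \<le> \<theta> * real K"
    using optimal_policy_Vbar_bounded[OF IH s opt] .
  then have "\<bar>(\<eta> s \<sigma>\<^sub>o\<^sub>p\<^sub>t - \<eta> s \<sigma>) - (etaD D \<sigma>\<^sub>o\<^sub>p\<^sub>t - etaD D \<sigma>)\<bar> \<le> 3 * w"
    unfolding w_def using \<tau> s Vb_large W_pos
    by (intro eta_deviation_le opt(1) \<sigma>) (auto simp: W_def)
  moreover have "6 * u \<le> etaD D \<sigma>\<^sub>o\<^sub>p\<^sub>t - etaD D \<sigma>"
    using gap opt(2)[OF \<sigma>'] unfolding u_def by simp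
  moreover have "w \<le> u"
    unfolding w_def u_def using C_div_antimono[of "\<tau> - 1" s] \<tau> W_pos
    by (simp add: mult_left_mono flip: times_divide_eq_right)
  moreover have "\<eta> s \<sigma>\<^sub>o\<^sub>p\<^sub>t - \<eta> s \<sigma> \<le> \<Delta> s \<sigma>"
    using Delta_ge[OF opt(1)] .
  moreover have "2 * sqrt (2 * (W * C s / real s)) < 3 * w"
    unfolding w_def using W_pos C_pos[OF s] s by (intro two_sqrt_two_less_three_sqrt) simp
  ultimately show ?thesis
    unfolding W_def by (simp add: abs_le_iff mult.assoc)
qed

lemma argmax_Vbar_bounded_all: "1 \<le> s \<Longrightarrow> argmax_Vbar_bounded s"
proof (induction s rule: less_induct)
  case (less s)
  show ?case
    unfolding argmax_Vbar_bounded_def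
  proof (intro ballI impI)
    fix \<sigma>
    assume \<sigma>: "\<sigma> \<in> Pol" and argmax: "\<Delta> s \<sigma> = 0"
    show "Vb s \<sigma> \<le> \<theta> * real K"
    proof (rule ccontr)
      assume "\<not> ?thesis"
      then have Vb_large: "\<theta> * real K < Vb s \<sigma>"
        by simp
      then have "2 * sqrt (2 * Vb s \<sigma> * C s / real s) < \<Delta> s \<sigma>"
        using less by (intro Delta_large_of_Vbar_large_step \<sigma>) auto
      moreover have "0 \<le> 2 * sqrt (2 * Vb s \<sigma> * C s / real s)"
        using Vb_large theta_K_pos C_pos[OF less.prems] by simp
      ultimately show False
        using argmax by simp
    qed
  qed
qed

theorem Delta_large_of_Vbar_large:
  assumes "1 \<le> t" "\<pi> \<in> Pol" "\<theta> * real K < Vb t \<pi>"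
  shows "2 * sqrt (2 * Vb t \<pi> * C t / real t) < \<Delta> t \<pi>"
  using Delta_large_of_Vbar_large_step argmax_Vbar_bounded_all assms by blast

end

theorem lemma14:
  fixes A :: "'a set" and Pol :: "('x \<Rightarrow> 'a) set"
    and D :: "('x \<times> ('a \<Rightarrow> real)) measure"
    and \<delta> \<epsilon> c_opt :: real
    and xs :: "nat \<Rightarrow> 'x" and as :: "nat \<Rightarrow> 'a" and rs ps :: "nat \<Rightarrow> real"
    and Ps :: "nat \<Rightarrow> ('x \<Rightarrow> 'a) \<Rightarrow> real"
    and \<pi> :: "'x \<Rightarrow> 'a" and t :: nat
    and K N :: nat and \<rho> \<theta> :: real
  defines "K \<equiv> card A" and "N \<equiv> card Pol"
    and "\<rho> \<equiv> 7500 / \<epsilon> ^ 3"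
    and "\<theta> \<equiv> (\<rho> + 1) / (1 - (1 + \<epsilon>) / 2)"
  assumes A_fin: "finite A" and A_ne: "A \<noteq> {}"
    and Pi_fin: "finite Pol" and Pi_ne: "Pol \<noteq> {}"
    and Pi_A: "\<forall>\<sigma>\<in>Pol. \<forall>x. \<sigma> x \<in> A"
    and D_prob: "prob_space D"
    and D_meas_pol: "\<forall>\<sigma>\<in>Pol. (\<lambda>z. \<sigma> (fst z)) \<in> measurable D (count_space UNIV)"
    and D_meas_rew: "\<forall>a\<in>A. (\<lambda>z. snd z a) \<in> borel_measurable D"
    and D_rew: "AE z in D. \<forall>a\<in>A. 0 \<le> snd z a \<and> snd z a \<le> 1"
    and \<delta>_pos: "0 < \<delta>" and \<delta>_lt: "\<delta> < 1"
    and \<epsilon>_pos: "0 < \<epsilon>" and \<epsilon>_lt: "\<epsilon> < 1"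
    and c_opt_nonneg: "0 \<le> c_opt"
    \<comment> \<open>RandomizedUCB: properties of P_t, a_t, r_t, p_t at every round t \<ge> 1\<close>
    and alg_dist: "\<forall>s\<ge>1. is_dist Pol (Ps s)"
    and alg_constr: "\<forall>s\<ge>1. \<forall>Q. is_dist Pol Q \<longrightarrow>
        constr_lhs K N \<delta> Pol xs (Ps s) s Q \<le> constr_rhs K N \<delta> Pol xs as rs ps s Q + real K"
    and alg_opt: "\<forall>s\<ge>1. \<forall>P. is_dist Pol P \<and>
        (\<forall>Q. is_dist Pol Q \<longrightarrow> constr_lhs K N \<delta> Pol xs P s Q \<le> constr_rhs K N \<delta> Pol xs as rs ps s Q)
        \<longrightarrow> objective Pol xs as rs ps s (Ps s)
              \<le> objective Pol xs as rs ps s P + c_opt * sqrt (real K * Cc N \<delta> s / real s)"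
    and alg_act: "\<forall>s\<ge>1. as s \<in> A"
    and alg_rew: "\<forall>s\<ge>1. 0 \<le> rs s \<and> rs s \<le> 1"
    and alg_prob: "\<forall>s\<ge>1. ps s = (1 - real K * mu K N \<delta> s) * Wd Pol (Ps s) (xs s) (as s) + mu K N \<delta> s"
    \<comment> \<open>Condition 1\<close>
    and cond1_i: "\<forall>\<sigma>\<in>Pol. \<forall>s\<ge>t1 K N \<delta>.
        (\<integral>z. inv_prob K N \<delta> Pol (Ps s) s (fst z) \<sigma> \<partial>D)
          \<le> (1 + \<epsilon>) * emp_avg xs (s - 1) (\<lambda>x. inv_prob K N \<delta> Pol (Ps s) s x \<sigma>) + \<rho> * real K"
    and cond1_ii: "\<forall>\<sigma>\<in>Pol. \<forall>\<sigma>'\<in>Pol. \<forall>s\<ge>t0 K N \<delta>.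
        \<bar>(eta_emp xs as rs ps s (polW \<sigma>) - eta_emp xs as rs ps s (polW \<sigma>'))
           - (etaD D \<sigma> - etaD D \<sigma>')\<bar>
        \<le> 2 * sqrt ((Vbar D K N \<delta> Pol Ps s \<sigma> + Vbar D K N \<delta> Pol Ps s \<sigma>') * Cc N \<delta> s / real s)"
    and \<pi>_in: "\<pi> \<in> Pol"
    and t_ge: "t \<ge> t1 K N \<delta>"
    and V_big: "Vbar D K N \<delta> Pol Ps t \<pi> > \<theta> * real K"
  shows "Delta_emp Pol xs as rs ps t (polW \<pi>)
           > 2 * sqrt (2 * Vbar D K N \<delta> Pol Ps t \<pi> * Cc N \<delta> t / real t)"
proof -
  have "K = card A" "N = card Pol" "\<rho> = 7500 / \<epsilon> ^ 3" "\<theta> = (\<rho> + 1) / (1 - (1 + \<epsilon>) / 2)"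
    using assms(1-4) by simp_all
  \<comment> \<open>Only the program constraints and Condition 1 enter; \<open>t \<ge> t\<^sub>1\<close> is used just for \<open>t \<ge> 1\<close>.\<close>
  then interpret randomized_ucb A Pol D \<delta> \<epsilon> xs as rs ps Ps K N \<rho> \<theta>
    using A_fin A_ne Pi_fin Pi_ne D_prob \<delta>_pos \<delta>_lt \<epsilon>_pos \<epsilon>_lt alg_dist alg_constr cond1_i cond1_ii
    by (intro randomized_ucb.intro)
  have "1 \<le> t"
    using t1_ge_1 t_ge by simp
  then show ?thesis
    using Delta_large_of_Vbar_large \<pi>_in V_big by simp
qed

end
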